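(* Let $f,\tilde f,g,\tilde g,h,\tilde h,b,c$ be functions of two variables satisfying $b(u,v)=c(u,v)$, $g(u,v)=h(u,v)$, $\tilde g(u,v)=\tilde h(u,v)$. Let $q(n_1,n_2;y,z)$, $(n_1,n_2)\in\mathbb Z^2$, satisfy for all $y,z$ the 7-point equation $$f(q,q_{1,0})-\tilde f(q,q_{-1,0})+g(q,q_{0,1})-\tilde g(q,q_{0,-1})+h(q,q_{-1,-1})-\tilde h(q,q_{1,1})=0$$ at every site, together with the flows $$q_{,y}=b\bigl(q,-\tilde f(q,q_{-1,0})+g(q,q_{0,1})-\tilde h(q,q_{1,1})\bigr)=b\bigl(q,-f(q,q_{1,0})+\tilde g(q,q_{0,-1})-h(q,q_{-1,-1})\bigr),$$ $$q_{,z}=c\bigl(q,-\tilde f(q,q_{-1,0})-\tilde g(q,q_{0,-1})+h(q,q_{-1,-1})\bigr)=c\bigl(q,-f(q,q_{1,0})-g(q,q_{0,1})+\tilde h(q,q_{1,1})\bigr).$$ Fix an integer $j$ and set $u(2k)=q(k,j)$, $u(2k-1)=q(k,j+1)$ for $k\in\mathbb Z$. Then $u_{,t}:=u_{,y}+u_{,z}$ satisfies, at every $n\in\mathbb Z$ (both even and odd), the autonomous equation $$u_{,t}=b\bigl(u,-\tilde f(u,u_{-2})+g(u,u_{-1})-\tilde g(u,u_1)\bigr)+b\bigl(u,-f(u,u_2)-g(u,u_{-1})+\tilde g(u,u_1)\bigr),$$ where $u=u(n)$, $u_m=u(n+m)$.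
   Context: Notation: $q_{i,j}=q(n_1+i,n_2+j)$; subscripts ${,y},{,z},{,t}$ denote derivatives in $y,z,t$. *)

theory Defs
  imports "HOL-Analysis.Analysis"
begin

definition chain_u :: "(int \<Rightarrow> int \<Rightarrow> real \<Rightarrow> real \<Rightarrow> real) \<Rightarrow> int \<Rightarrow> int \<Rightarrow> real \<Rightarrow> real \<Rightarrow> real" where
  "chain_u q j m y z = (if even m then q (m div 2) j y z else q ((m + 1) div 2) (j + 1) y z)"

end

theory Submission
  imports Defs
begin

text \<open>At an even site u = q(k,j) the y-flow is taken in its first form and the z-flow in its
  second; at an odd site u = q(k,j+1) it is the other way round. In either case the
  neighbours u(n-2), u(n-1), u(n+1), u(n+2) are exactly the lattice points occurring in the
  chosen forms, and the identities b = c, g = h, gt = ht merge the two flows into the stated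
  equation.\<close>

lemma chain_u_even: "chain_u q j (2 * k) = q k j"
  by (simp add: chain_u_def fun_eq_iff)

lemma chain_u_odd: "chain_u q j (2 * k - 1) = q k (j + 1)"
  by (simp add: chain_u_def fun_eq_iff)

lemma int_even_or_odd_double:
  fixes n :: int
  obtains k where "n = 2 * k" | k where "n = 2 * k - 1"
  by (metis add_diff_cancel_right' evenE oddE)

lemma deriv_add_partials:
  assumes "((\<lambda>s. F s z) has_real_derivative A) (at y)"
    and "((\<lambda>s. F y s) has_real_derivative B) (at z)"
  shows "deriv (\<lambda>s. F s z) y + deriv (\<lambda>s. F y s) z = A + B"
  using assms by (simp add: DERIV_imp_deriv)

theorem mainTheorem2:
  fixes f ft g gt h ht b c :: "real \<Rightarrow> real \<Rightarrow> real"
    and q :: "int \<Rightarrow> int \<Rightarrow> real \<Rightarrow> real \<Rightarrow> real"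
    and j :: int
  assumes bc: "\<And>u v. b u v = c u v"
    and gh: "\<And>u v. g u v = h u v"
    and gth: "\<And>u v. gt u v = ht u v"
    and lattice: "\<And>n1 n2 y z.
        f (q n1 n2 y z) (q (n1+1) n2 y z) - ft (q n1 n2 y z) (q (n1-1) n2 y z)
      + g (q n1 n2 y z) (q n1 (n2+1) y z) - gt (q n1 n2 y z) (q n1 (n2-1) y z)
      + h (q n1 n2 y z) (q (n1-1) (n2-1) y z) - ht (q n1 n2 y z) (q (n1+1) (n2+1) y z) = 0"
    and flow_y: "\<And>n1 n2 y z. ((\<lambda>s. q n1 n2 s z) has_real_derivative
        b (q n1 n2 y z) (- ft (q n1 n2 y z) (q (n1-1) n2 y z) + g (q n1 n2 y z) (q n1 (n2+1) y z)
                         - ht (q n1 n2 y z) (q (n1+1) (n2+1) y z))) (at y)"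
    and flow_y_eq: "\<And>n1 n2 y z.
        b (q n1 n2 y z) (- ft (q n1 n2 y z) (q (n1-1) n2 y z) + g (q n1 n2 y z) (q n1 (n2+1) y z)
                         - ht (q n1 n2 y z) (q (n1+1) (n2+1) y z))
      = b (q n1 n2 y z) (- f (q n1 n2 y z) (q (n1+1) n2 y z) + gt (q n1 n2 y z) (q n1 (n2-1) y z)
                         - h (q n1 n2 y z) (q (n1-1) (n2-1) y z))"
    and flow_z: "\<And>n1 n2 y z. ((\<lambda>s. q n1 n2 y s) has_real_derivative
        c (q n1 n2 y z) (- ft (q n1 n2 y z) (q (n1-1) n2 y z) - gt (q n1 n2 y z) (q n1 (n2-1) y z)
                         + h (q n1 n2 y z) (q (n1-1) (n2-1) y z))) (at z)"
    and flow_z_eq: "\<And>n1 n2 y z.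
        c (q n1 n2 y z) (- ft (q n1 n2 y z) (q (n1-1) n2 y z) - gt (q n1 n2 y z) (q n1 (n2-1) y z)
                         + h (q n1 n2 y z) (q (n1-1) (n2-1) y z))
      = c (q n1 n2 y z) (- f (q n1 n2 y z) (q (n1+1) n2 y z) - g (q n1 n2 y z) (q n1 (n2+1) y z)
                         + ht (q n1 n2 y z) (q (n1+1) (n2+1) y z))"
  shows "\<forall>n y z.
      deriv (\<lambda>s. chain_u q j n s z) y + deriv (\<lambda>s. chain_u q j n y s) z
    = b (chain_u q j n y z) (- ft (chain_u q j n y z) (chain_u q j (n-2) y z)
                             + g (chain_u q j n y z) (chain_u q j (n-1) y z)
                             - gt (chain_u q j n y z) (chain_u q j (n+1) y z))
    + b (chain_u q j n y z) (- f (chain_u q j n y z) (chain_u q j (n+2) y z)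
                             - g (chain_u q j n y z) (chain_u q j (n-1) y z)
                             + gt (chain_u q j n y z) (chain_u q j (n+1) y z))"
apply (intro allI)
  subgoal for n y z
  proof (cases rule: int_even_or_odd_double[of n])
    case (1 k)
    then have "n - 2 = 2 * (k - 1)" "n - 1 = 2 * k - 1" "n + 1 = 2 * (k + 1) - 1"
      "n + 2 = 2 * (k + 1)" by simp_all
    with 1 show ?thesis
      using deriv_add_partials[OF flow_y flow_z[unfolded flow_z_eq], of k j z y]
      by (simp only: chain_u_even chain_u_odd bc gth)
  next
    case (2 k)
    then have "n - 2 = 2 * (k - 1) - 1" "n - 1 = 2 * (k - 1)" "n + 1 = 2 * k"
      "n + 2 = 2 * (k + 1) - 1" by simp_all
    with 2 show ?thesis
      using deriv_add_partials[OF flow_y[unfolded flow_y_eq] flow_z, of k "j + 1" z y]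
      by (simp only: chain_u_even chain_u_odd bc gh add_diff_cancel_right') (simp add: algebra_simps)
  qed
  done

end
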